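(* Let $G$ and $H$ be finite graphs such that $G$ does not contain $H$ as a minor, let $k\ge 1$ be an integer, and let $J$ be the $k$-subdivision of $H$. If $f$ is an embedding of the shortest-path metric of $J$ into the shortest-path metric of $G$, then the distortion of $f$ is at least $k/6-1/2$.
   Context: All graphs carry their shortest-path metric with every edge of length $1$. The $k$-subdivision of a graph $H$ is the graph obtained by replacing each edge of $H$ by a path of length $k$. For metric spaces $(X,\nu)$, $(Y,\mu)$ and an injective map $\Phi:X\to Y$, the distortion of $\Phi$ is $\|\Phi\|\cdot\|\Phi^{-1}\|$, where $\|\Phi\|=\max_{x\neq y}\mu(\Phi(x),\Phi(y))/\nu(x,y)$ and $\|\Phi^{-1}\|=\max_{x\neq y}\nu(x,y)/\mu(\Phi(x),\Phi(y))$. *)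

theory Defs
  imports Complex_Main
begin

type_synonym 'a graph = "'a set \<times> 'a set set"

definition verts :: "'a graph \<Rightarrow> 'a set" where "verts G = fst G"
definition edges :: "'a graph \<Rightarrow> 'a set set" where "edges G = snd G"

definition fin_graph :: "'a graph \<Rightarrow> bool" where
  "fin_graph G \<longleftrightarrow> finite (verts G) \<and> (\<forall>e\<in>edges G. e \<subseteq> verts G \<and> card e = 2)"

definition walk :: "'a graph \<Rightarrow> 'a list \<Rightarrow> bool" where
  "walk G xs \<longleftrightarrow> xs \<noteq> [] \<and> set xs \<subseteq> verts G \<and>
     (\<forall>i. Suc i < length xs \<longrightarrow> {xs ! i, xs ! Suc i} \<in> edges G)"

definition connected_in :: "'a graph \<Rightarrow> 'a set \<Rightarrow> bool" where
  "connected_in G S \<longleftrightarrow> (\<forall>x\<in>S. \<forall>y\<in>S. \<exists>xs. walk G xs \<and> set xs \<subseteq> S \<and> hd xs = x \<and> last xs = y)"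

definition connected_graph :: "'a graph \<Rightarrow> bool" where
  "connected_graph G \<longleftrightarrow> connected_in G (verts G)"

definition gdist :: "'a graph \<Rightarrow> 'a \<Rightarrow> 'a \<Rightarrow> nat" where
  "gdist G x y = (LEAST n. \<exists>xs. walk G xs \<and> hd xs = x \<and> last xs = y \<and> length xs = Suc n)"

definition is_minor :: "'b graph \<Rightarrow> 'a graph \<Rightarrow> bool" where
  "is_minor H G \<longleftrightarrow> (\<exists>B :: 'b \<Rightarrow> 'a set.
     (\<forall>v\<in>verts H. B v \<noteq> {} \<and> B v \<subseteq> verts G \<and> connected_in G (B v)) \<and>
     (\<forall>u\<in>verts H. \<forall>v\<in>verts H. u \<noteq> v \<longrightarrow> B u \<inter> B v = {}) \<and>
     (\<forall>u v. {u, v} \<in> edges H \<longrightarrow> (\<exists>x\<in>B u. \<exists>y\<in>B v. {x, y} \<in> edges G)))"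

text \<open>k-subdivision: each edge e = {a,b} (a < b) becomes the path
  Inl a, Inr (e,1), ..., Inr (e,k-1), Inl b.\<close>
definition sub_node :: "nat \<Rightarrow> 'b::linorder set \<Rightarrow> nat \<Rightarrow> 'b + ('b set \<times> nat)" where
  "sub_node k e i = (if i = 0 then Inl (Min e) else if i = k then Inl (Max e) else Inr (e, i))"

definition subdivision :: "nat \<Rightarrow> 'b::linorder graph \<Rightarrow> ('b + ('b set \<times> nat)) graph" where
  "subdivision k H =
    (Inl ` verts H \<union> {Inr (e, i) | e i. e \<in> edges H \<and> 0 < i \<and> i < k},
     {{sub_node k e i, sub_node k e (Suc i)} | e i. e \<in> edges H \<and> i < k})"

definition expansion :: "'b graph \<Rightarrow> 'a graph \<Rightarrow> ('b \<Rightarrow> 'a) \<Rightarrow> real" where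
  "expansion X Y f = Max {real (gdist Y (f x) (f y)) / real (gdist X x y) | x y.
      x \<in> verts X \<and> y \<in> verts X \<and> x \<noteq> y}"

definition contraction :: "'b graph \<Rightarrow> 'a graph \<Rightarrow> ('b \<Rightarrow> 'a) \<Rightarrow> real" where
  "contraction X Y f = Max {real (gdist X x y) / real (gdist Y (f x) (f y)) | x y.
      x \<in> verts X \<and> y \<in> verts X \<and> x \<noteq> y}"

definition distortion :: "'b graph \<Rightarrow> 'a graph \<Rightarrow> ('b \<Rightarrow> 'a) \<Rightarrow> real" where
  "distortion X Y f = expansion X Y f * contraction X Y f"

end

theory Submission
  imports Defs
begin

text \<open>Let \<open>\<alpha>\<close> and \<open>\<beta>\<close> be the expansion and the contraction of f and suppose
  \<open>6\<alpha>\<beta> + 3 < k\<close>. Joining the images of consecutive nodes of a subdivided edge by shortest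
  walks maps every edge e of H to a walk in G each of whose vertices lies within \<open>\<alpha>\<close> of the
  image of a node of e. Split it at the midpoint of e: the half at one end is connected, and the
  half at the other end, cut where it first meets the former, is connected, disjoint from it and
  adjacent to it. For each vertex u of H, the union of the halves at u over the edges at u is a
  branch set of an H-minor of G. Indeed, if halves at distinct vertices met, two nodes of the
  subdivision at distance at least k/2 would have images within \<open>2\<alpha>\<close> of each other,
  so by the contraction bound their distance would be at most \<open>2\<alpha>\<beta> < k/2\<close>.\<close>

section \<open>Walks and distances\<close>


lemma walk_Cons_Cons_iff:
  "walk G (x # y # zs) \<longleftrightarrow> x \<in> verts G \<and> {x, y} \<in> edges G \<and> walk G (y # zs)"
  by (auto simp: walk_def nth_Cons split: nat.splits)

lemma walk_singleton_iff [simp]: "walk G [x] \<longleftrightarrow> x \<in> verts G"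
  by (auto simp: walk_def)

lemma walk_not_Nil: "walk G xs \<Longrightarrow> xs \<noteq> []"
  by (simp add: walk_def)

lemma walk_set_subset: "walk G xs \<Longrightarrow> set xs \<subseteq> verts G"
  by (simp add: walk_def)

lemma set_tl_subset: "set (tl xs) \<subseteq> set xs"
  by (cases xs) auto

lemma walk_append_tl:
  "walk G xs \<Longrightarrow> walk G ys \<Longrightarrow> last xs = hd ys \<Longrightarrow> walk G (xs @ tl ys)"
proof (induction xs rule: induct_list012)
  case (2 x)
  then show ?case by (cases ys) (simp_all add: walk_def)
next
  case (3 x y zs)
  then show ?case by (simp add: walk_Cons_Cons_iff)
qed (simp add: walk_def)

lemma last_append_tl: "ys \<noteq> [] \<Longrightarrow> last xs = hd ys \<Longrightarrow> last (xs @ tl ys) = last ys"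
  by (cases ys) (auto simp: last_append)

lemma set_append_tl:
  "xs \<noteq> [] \<Longrightarrow> ys \<noteq> [] \<Longrightarrow> last xs = hd ys \<Longrightarrow> set (xs @ tl ys) = set xs \<union> set ys"
  by (cases ys) (auto dest: last_in_set)

lemma walk_rev:
  assumes "walk G xs"
  shows "walk G (rev xs)"
  unfolding walk_def
proof (intro conjI allI impI)
  fix i assume i: "Suc i < length (rev xs)"
  define j where "j = length xs - Suc (Suc i)"
  have "Suc j < length xs" and "Suc j = length xs - Suc i" using i by (simp_all add: j_def)
  then have "{xs ! j, xs ! (length xs - Suc i)} \<in> edges G" using assms by (metis walk_def)
  then show "{rev xs ! i, rev xs ! Suc i} \<in> edges G"
    using i by (simp add: rev_nth j_def insert_commute)
qed (use assms in \<open>auto simp: walk_def\<close>)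

lemma walk_take: "walk G xs \<Longrightarrow> 0 < n \<Longrightarrow> walk G (take n xs)"
  by (auto simp: walk_def dest: in_set_takeD)

lemma last_take_Suc: "j < length xs \<Longrightarrow> last (take (Suc j) xs) = xs ! j"
  by (subst last_conv_nth) auto

definition reach :: "'a graph \<Rightarrow> 'a \<Rightarrow> 'a \<Rightarrow> bool" where
  "reach G x y \<longleftrightarrow> (\<exists>xs. walk G xs \<and> hd xs = x \<and> last xs = y)"

lemma reach_refl: "x \<in> verts G \<Longrightarrow> reach G x x"
  unfolding reach_def by (intro exI[of _ "[x]"]) simp

lemma reach_edge: "{x, y} \<in> edges G \<Longrightarrow> x \<in> verts G \<Longrightarrow> y \<in> verts G \<Longrightarrow> reach G x y"
  unfolding reach_def by (intro exI[of _ "[x, y]"]) (simp add: walk_Cons_Cons_iff)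

lemma reach_sym: "reach G x y \<Longrightarrow> reach G y x"
  unfolding reach_def
proof (elim exE conjE)
  fix xs assume "walk G xs" "hd xs = x" "last xs = y"
  then show "\<exists>ys. walk G ys \<and> hd ys = y \<and> last ys = x"
    using walk_not_Nil by (intro exI[of _ "rev xs"]) (simp add: walk_rev hd_rev last_rev)
qed

lemma reach_trans: "reach G x y \<Longrightarrow> reach G y z \<Longrightarrow> reach G x z"
  unfolding reach_def
proof (elim exE conjE)
  fix xs ys
  assume xs: "walk G xs" "hd xs = x" "last xs = y" and ys: "walk G ys" "hd ys = y" "last ys = z"
  then show "\<exists>zs. walk G zs \<and> hd zs = x \<and> last zs = z"
    using walk_not_Nil[OF xs(1)] walk_not_Nil[OF ys(1)] last_append_tl[of ys xs]
    by (intro exI[of _ "xs @ tl ys"]) (simp add: walk_append_tl)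
qed

lemma connected_graph_reach:
  "connected_graph G \<Longrightarrow> x \<in> verts G \<Longrightarrow> y \<in> verts G \<Longrightarrow> reach G x y"
  unfolding connected_graph_def connected_in_def reach_def by blast

lemma gdist_le_length: "walk G xs \<Longrightarrow> gdist G (hd xs) (last xs) \<le> length xs - 1"
  unfolding gdist_def by (rule Least_le) (auto simp: walk_def)

lemma gdist_shortest_walk:
  assumes "reach G x y"
  obtains xs where "walk G xs" "hd xs = x" "last xs = y" "length xs = Suc (gdist G x y)"
proof -
  obtain xs where xs: "walk G xs" "hd xs = x" "last xs = y"
    using assms unfolding reach_def by blast
  then have "\<exists>n xs. walk G xs \<and> hd xs = x \<and> last xs = y \<and> length xs = Suc n"
    by (intro exI[of _ "length xs - 1"] exI[of _ xs]) (auto simp: walk_def)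
  then have "\<exists>xs. walk G xs \<and> hd xs = x \<and> last xs = y \<and> length xs = Suc (gdist G x y)"
    unfolding gdist_def by (rule LeastI_ex)
  then show thesis using that by blast
qed

lemma gdist_self: "x \<in> verts G \<Longrightarrow> gdist G x x = 0"
  using gdist_le_length[of G "[x]"] by simp

lemma gdist_pos:
  assumes "reach G x y" "x \<noteq> y"
  shows "0 < gdist G x y"
proof (rule ccontr)
  assume "\<not> 0 < gdist G x y"
  then obtain xs where "walk G xs" "hd xs = x" "last xs = y" "length xs = Suc 0"
    using gdist_shortest_walk[OF assms(1)] by (metis neq0_conv)
  then show False using assms(2) by (cases xs) auto
qed

lemma gdist_edge:
  assumes "{x, y} \<in> edges G" "x \<in> verts G" "y \<in> verts G" "x \<noteq> y"
  shows "gdist G x y = 1"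
  using gdist_le_length[of G "[x, y]"] gdist_pos[OF reach_edge[OF assms(1-3)] assms(4)] assms
  by (simp add: walk_Cons_Cons_iff)

lemma gdist_commute_le: "reach G x y \<Longrightarrow> gdist G y x \<le> gdist G x y"
proof -
  assume "reach G x y"
  then obtain xs where "walk G xs" "hd xs = x" "last xs = y" "length xs = Suc (gdist G x y)"
    by (rule gdist_shortest_walk)
  then show ?thesis
    using gdist_le_length[OF walk_rev] walk_not_Nil by (fastforce simp: hd_rev last_rev)
qed

lemma gdist_commute: "reach G x y \<Longrightarrow> gdist G y x = gdist G x y"
  by (simp add: gdist_commute_le reach_sym order_antisym)

lemma gdist_triangle:
  assumes "reach G x y" "reach G y z"
  shows "gdist G x z \<le> gdist G x y + gdist G y z"
proof -
  obtain xs where xs: "walk G xs" "hd xs = x" "last xs = y" "length xs = Suc (gdist G x y)"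
    using gdist_shortest_walk[OF assms(1)] .
  obtain ys where ys: "walk G ys" "hd ys = y" "last ys = z" "length ys = Suc (gdist G y z)"
    using gdist_shortest_walk[OF assms(2)] .
  have "gdist G (hd (xs @ tl ys)) (last (xs @ tl ys)) \<le> length (xs @ tl ys) - 1"
    using xs ys by (intro gdist_le_length walk_append_tl) auto
  moreover have "hd (xs @ tl ys) = x" "last (xs @ tl ys) = z"
    using xs ys walk_not_Nil[OF xs(1)] walk_not_Nil[OF ys(1)] last_append_tl[of ys xs] by auto
  ultimately show ?thesis using xs ys by simp
qed

lemma gdist_hd_nth_le: "walk G xs \<Longrightarrow> t < length xs \<Longrightarrow> gdist G (hd xs) (xs ! t) \<le> t"
  using gdist_le_length[OF walk_take, of G xs "Suc t"] last_take_Suc[of t xs] by simp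

lemma potential_diff_le_length:
  fixes \<phi> :: "'a \<Rightarrow> int"
  assumes "\<And>a b. {a, b} \<in> edges G \<Longrightarrow> \<phi> a - \<phi> b \<le> 1"
  shows "walk G xs \<Longrightarrow> \<phi> (last xs) - \<phi> (hd xs) \<le> int (length xs) - 1"
proof (induction xs rule: induct_list012)
  case (3 x y zs)
  then have "\<phi> y - \<phi> x \<le> 1" using assms[of y x] by (simp add: walk_Cons_Cons_iff insert_commute)
  with 3 show ?case by (simp add: walk_Cons_Cons_iff)
qed (simp_all add: walk_def)

lemma potential_diff_le_gdist:
  fixes \<phi> :: "'a \<Rightarrow> int"
  assumes "\<And>a b. {a, b} \<in> edges G \<Longrightarrow> \<phi> a - \<phi> b \<le> 1" and "reach G x y"
  shows "\<phi> y - \<phi> x \<le> int (gdist G x y)"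
proof -
  obtain xs where "walk G xs" "hd xs = x" "last xs = y" "length xs = Suc (gdist G x y)"
    using gdist_shortest_walk[OF assms(2)] .
  then show ?thesis using potential_diff_le_length[OF assms(1)] by fastforce
qed

lemma connected_in_singleton: "x \<in> verts G \<Longrightarrow> connected_in G {x}"
  unfolding connected_in_def by (auto intro!: exI[of _ "[x]"])

lemma connected_in_set_walk:
  assumes "walk G xs"
  shows "connected_in G (set xs)"
  unfolding connected_in_def
proof (intro ballI)
  fix x y assume "x \<in> set xs" "y \<in> set xs"
  then obtain i j where i: "i < length xs" "x = xs ! i" and j: "j < length xs" "y = xs ! j"
    by (metis in_set_conv_nth)
  let ?ys = "rev (take (Suc i) xs) @ tl (take (Suc j) xs)"
  have "walk G ?ys"
    using assms walk_not_Nil[OF assms]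
    by (intro walk_append_tl walk_rev walk_take) (simp_all add: last_rev)
  moreover have "set ?ys \<subseteq> set xs"
    using set_tl_subset by (fastforce dest: in_set_takeD)
  moreover have "hd ?ys = x" "last ?ys = y"
    using i j walk_not_Nil[OF assms] last_take_Suc
      last_append_tl[of "take (Suc j) xs" "rev (take (Suc i) xs)"]
    by (simp_all add: hd_rev last_rev)
  ultimately show "\<exists>ys. walk G ys \<and> set ys \<subseteq> set xs \<and> hd ys = x \<and> last ys = y"
    by blast
qed

lemma connected_in_UN:
  assumes "\<And>c. c \<in> C \<Longrightarrow> connected_in G (X c) \<and> z \<in> X c"
  shows "connected_in G (\<Union>c\<in>C. X c)"
  unfolding connected_in_def
proof (intro ballI)
  fix x y assume "x \<in> (\<Union>c\<in>C. X c)" "y \<in> (\<Union>c\<in>C. X c)"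
  then obtain c d where c: "c \<in> C" "x \<in> X c" and d: "d \<in> C" "y \<in> X d" by blast
  obtain xs where xs: "walk G xs" "set xs \<subseteq> X c" "hd xs = x" "last xs = z"
    using assms[OF c(1)] c(2) unfolding connected_in_def by blast
  obtain ys where ys: "walk G ys" "set ys \<subseteq> X d" "hd ys = z" "last ys = y"
    using assms[OF d(1)] d(2) unfolding connected_in_def by blast
  have "set (xs @ tl ys) \<subseteq> (\<Union>c\<in>C. X c)"
    using xs(2) ys(2) c(1) d(1) set_tl_subset[of ys] by auto
  then show "\<exists>zs. walk G zs \<and> set zs \<subseteq> (\<Union>c\<in>C. X c) \<and> hd zs = x \<and> last zs = y"
    using xs ys walk_not_Nil[OF xs(1)] walk_not_Nil[OF ys(1)] last_append_tl[of ys xs]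
    by (intro exI[of _ "xs @ tl ys"]) (simp add: walk_append_tl)
qed

lemma walk_concat:
  assumes "a < b"
    and "\<And>i. a \<le> i \<Longrightarrow> i < b \<Longrightarrow>
      walk G (w i) \<and> hd (w i) = g i \<and> last (w i) = g (Suc i)"
  shows "\<exists>xs. walk G xs \<and> hd xs = g a \<and> last xs = g b
    \<and> set xs = (\<Union>i\<in>{a..<b}. set (w i))"
  using assms
proof (induction b)
  case (Suc b)
  show ?case
  proof (cases "a = b")
    case True
    then show ?thesis using Suc(3)[of a] by (intro exI[of _ "w a"]) simp
  next
    case False
    then obtain xs where xs: "walk G xs" "hd xs = g a" "last xs = g b"
      "set xs = (\<Union>i\<in>{a..<b}. set (w i))"
      using Suc by fastforce
    have wb: "walk G (w b)" "hd (w b) = g b" "last (w b) = g (Suc b)"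
      using Suc(2) Suc(3)[of b] False by simp_all
    have "{a..<Suc b} = insert b {a..<b}" using Suc(2) by auto
    then have "set (xs @ tl (w b)) = (\<Union>i\<in>{a..<Suc b}. set (w i))"
      using xs wb walk_not_Nil[OF xs(1)] walk_not_Nil[OF wb(1)] by (subst set_append_tl) auto
    then show ?thesis using xs wb walk_not_Nil[OF xs(1)] walk_not_Nil[OF wb(1)]
      by (intro exI[of _ "xs @ tl (w b)"]) (simp add: walk_append_tl last_append_tl)
  qed
qed simp

lemma walk_enters_set:
  assumes "walk G xs" "hd xs \<notin> S" "last xs \<in> S"
  shows "\<exists>ys. walk G ys \<and> hd ys = hd xs \<and> set ys \<subseteq> set xs \<and> set ys \<inter> S = {}
    \<and> (\<exists>y\<in>S. {last ys, y} \<in> edges G)"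
  using assms
proof (induction xs rule: induct_list012)
  case (3 x y zs)
  show ?case
  proof (cases "y \<in> S")
    case True
    then show ?thesis using 3(3,4) by (intro exI[of _ "[x]"]) (auto simp: walk_Cons_Cons_iff)
  next
    case False
    then obtain ys where ys: "walk G ys" "hd ys = y" "set ys \<subseteq> set (y # zs)" "set ys \<inter> S = {}"
      "\<exists>y\<in>S. {last ys, y} \<in> edges G"
      using 3 by (auto simp: walk_Cons_Cons_iff)
    moreover from ys(1,2) 3(3) have "walk G (x # ys)"
      by (cases ys) (auto simp: walk_Cons_Cons_iff)
    ultimately show ?thesis using 3(4) walk_not_Nil[OF ys(1)] by (intro exI[of _ "x # ys"]) auto
  qed
qed (auto simp: walk_def)

section \<open>Subdivisions\<close>

lemma edge_Min_Max:
  assumes "fin_graph H" "e \<in> edges H"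
  shows "e = {Min e, Max e}" "Min e < Max e" "Min e \<in> verts H" "Max e \<in> verts H"
proof -
  obtain a b where ab: "e = {a, b}" "a \<noteq> b"
    using assms by (auto simp: fin_graph_def card_2_iff)
  then show "e = {Min e, Max e}" "Min e < Max e"
    by (cases "a < b"; auto simp: min_def max_def)+
  have "e \<subseteq> verts H" using assms by (simp add: fin_graph_def)
  then show "Min e \<in> verts H" "Max e \<in> verts H" using ab by (auto simp: min_def max_def)
qed

lemma verts_subdivision:
  "verts (subdivision k H) = Inl ` verts H \<union> {Inr (e, i) | e i. e \<in> edges H \<and> 0 < i \<and> i < k}"
  by (simp add: subdivision_def verts_def)

lemma edges_subdivision:
  "edges (subdivision k H) = {{sub_node k e i, sub_node k e (Suc i)} | e i. e \<in> edges H \<and> i < k}"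
  by (simp add: subdivision_def edges_def)

lemma sub_node_0 [simp]: "sub_node k e 0 = Inl (Min e)"
  by (simp add: sub_node_def)

lemma sub_node_self [simp]: "0 < k \<Longrightarrow> sub_node k e k = Inl (Max e)"
  by (simp add: sub_node_def)

lemma sub_node_in_verts:
  "fin_graph H \<Longrightarrow> e \<in> edges H \<Longrightarrow> i \<le> k \<Longrightarrow> sub_node k e i \<in> verts (subdivision k H)"
  using edge_Min_Max(3,4)[of H e] by (auto simp: sub_node_def verts_subdivision)

lemma sub_node_edge:
  "e \<in> edges H \<Longrightarrow> i < k \<Longrightarrow> {sub_node k e i, sub_node k e (Suc i)} \<in> edges (subdivision k H)"
  unfolding edges_subdivision by blast

lemma sub_node_inject:
  assumes "fin_graph H" "e \<in> edges H" "i \<le> k" "j \<le> k"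
  shows "sub_node k e i = sub_node k e j \<longleftrightarrow> i = j"
  using assms edge_Min_Max(2)[OF assms(1,2)] by (auto simp: sub_node_def)

lemma reach_sub_node_0:
  assumes "fin_graph H" "e \<in> edges H" "j \<le> k"
  shows "reach (subdivision k H) (sub_node k e 0) (sub_node k e j)"
  using assms(3)
proof (induction j)
  case 0
  show ?case using sub_node_in_verts[OF assms(1,2), of 0] by (intro reach_refl) simp
next
  case (Suc j)
  then have "reach (subdivision k H) (sub_node k e j) (sub_node k e (Suc j))"
    using sub_node_edge[OF assms(2)] sub_node_in_verts[OF assms(1,2)] by (intro reach_edge) auto
  then show ?case using Suc reach_trans by simp
qed

lemma reach_Inl_walk:
  assumes "fin_graph H" "0 < k" "walk H ys"
  shows "reach (subdivision k H) (Inl (hd ys)) (Inl (last ys))"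
  using assms(3)
proof (induction ys rule: induct_list012)
  case (2 x)
  then show ?case by (simp add: reach_refl verts_subdivision)
next
  case (3 x y zs)
  let ?e = "{x, y}"
  have e: "?e \<in> edges H" and w: "walk H (y # zs)" using 3(3) by (simp_all add: walk_Cons_Cons_iff)
  have "reach (subdivision k H) (Inl (Min ?e)) (Inl (Max ?e))"
    using reach_sub_node_0[OF assms(1) e, of k k]
    by (simp only: sub_node_0 sub_node_self[OF assms(2)] order_refl)
  moreover have "(x = Min ?e \<and> y = Max ?e) \<or> (x = Max ?e \<and> y = Min ?e)"
    using edge_Min_Max(1,2)[OF assms(1) e] by (metis doubleton_eq_iff)
  ultimately have "reach (subdivision k H) (Inl x) (Inl y)" using reach_sym by metis
  with 3(2)[OF w] show ?case using reach_trans by fastforce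
qed (simp add: walk_def)

lemma reach_sub_nodes:
  assumes "fin_graph H" "connected_graph H" "0 < k" "e \<in> edges H" "e' \<in> edges H" "i \<le> k" "j \<le> k"
  shows "reach (subdivision k H) (sub_node k e i) (sub_node k e' j)"
proof -
  obtain ys where "walk H ys" "hd ys = Min e" "last ys = Min e'"
    using assms(2) edge_Min_Max(3)[OF assms(1,4)] edge_Min_Max(3)[OF assms(1,5)]
    unfolding connected_graph_def connected_in_def by blast
  then have "reach (subdivision k H) (sub_node k e 0) (sub_node k e' 0)"
    using reach_Inl_walk[OF assms(1,3)] by fastforce
  then show ?thesis
    using reach_sub_node_0[OF assms(1,4,6)] reach_sub_node_0[OF assms(1,5,7)] reach_sym reach_trans
    by metis
qed

lemma gdist_sub_node_Suc:
  assumes "fin_graph H" "e \<in> edges H" "i < k"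
  shows "gdist (subdivision k H) (sub_node k e i) (sub_node k e (Suc i)) = 1"
  using assms sub_node_inject[OF assms(1,2), of i k "Suc i"]
  by (intro gdist_edge sub_node_edge sub_node_in_verts) auto

text \<open>A truncated distance from the node i of the subdivided edge e: exact along e, through
  the endpoints of e onto the neighbouring edges, and capped at k elsewhere. It is 1-Lipschitz
  and vanishes at its source, so it bounds the distance in the subdivision from below.\<close>

definition vertex_pot :: "nat \<Rightarrow> 'b::linorder set \<Rightarrow> nat \<Rightarrow> 'b \<Rightarrow> int" where
  "vertex_pot k e i v = (if v = Min e then int i else if v = Max e then int k - int i else int k)"

definition edge_pot :: "nat \<Rightarrow> 'b::linorder set \<Rightarrow> nat \<Rightarrow> 'b set \<Rightarrow> nat \<Rightarrow> int" where
  "edge_pot k e i e' j = (if e' = e then \<bar>int i - int j\<bar>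
     else min (int k)
       (min (vertex_pot k e i (Min e') + int j) (vertex_pot k e i (Max e') + int k - int j)))"

definition pot :: "nat \<Rightarrow> 'b::linorder set \<Rightarrow> nat \<Rightarrow> 'b + ('b set \<times> nat) \<Rightarrow> int" where
  "pot k e i z = (case z of Inl v \<Rightarrow> vertex_pot k e i v | Inr (e', j) \<Rightarrow> edge_pot k e i e' j)"

lemma pot_sub_node:
  assumes "fin_graph H" "e \<in> edges H" "e' \<in> edges H" "i \<le> k" "j \<le> k" "0 < k"
  shows "pot k e i (sub_node k e' j) = edge_pot k e i e' j"
proof -
  have "Min e \<noteq> Max e" using edge_Min_Max(2)[OF assms(1,2)] by simp
  moreover have "0 \<le> vertex_pot k e i v" "vertex_pot k e i v \<le> int k" for v
    using assms(4) by (auto simp: vertex_pot_def)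
  ultimately show ?thesis using assms(4-6)
    by (auto simp: pot_def edge_pot_def sub_node_def vertex_pot_def min_def)
qed

lemma pot_lipschitz:
  assumes "fin_graph H" "e \<in> edges H" "i \<le> k" "0 < k" "{a, b} \<in> edges (subdivision k H)"
  shows "pot k e i a - pot k e i b \<le> 1"
proof -
  obtain e' j where e': "e' \<in> edges H" "j < k"
    and ab: "{a, b} = {sub_node k e' j, sub_node k e' (Suc j)}"
    using assms(5) unfolding edges_subdivision by blast
  have "\<bar>edge_pot k e i e' j - edge_pot k e i e' (Suc j)\<bar> \<le> 1"
    unfolding edge_pot_def by (auto simp: min_def)
  moreover have "pot k e i (sub_node k e' j) = edge_pot k e i e' j"
    "pot k e i (sub_node k e' (Suc j)) = edge_pot k e i e' (Suc j)"
    using pot_sub_node[OF assms(1,2) e'(1) assms(3)] e'(2) assms(4) by simp_all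
  ultimately show ?thesis using ab by (auto simp: doubleton_eq_iff)
qed

lemma gdist_sub_node_ge_edge_pot:
  assumes "fin_graph H" "connected_graph H" "0 < k" "e \<in> edges H" "e' \<in> edges H" "i \<le> k" "j \<le> k"
  shows "edge_pot k e i e' j \<le> int (gdist (subdivision k H) (sub_node k e i) (sub_node k e' j))"
proof -
  have "pot k e i (sub_node k e' j) - pot k e i (sub_node k e i)
      \<le> int (gdist (subdivision k H) (sub_node k e i) (sub_node k e' j))"
    using pot_lipschitz[OF assms(1,4,6,3)] reach_sub_nodes[OF assms] by (rule potential_diff_le_gdist)
  then show ?thesis
    using pot_sub_node[OF assms(1,4,5,6,7,3)] pot_sub_node[OF assms(1,4,4,6,6,3)]
    by (simp add: edge_pot_def)
qed

lemma gdist_sub_nodes_same_edge: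
  assumes "fin_graph H" "connected_graph H" "0 < k" "e \<in> edges H" "i \<le> k" "j \<le> k"
  shows "\<bar>int i - int j\<bar> \<le> int (gdist (subdivision k H) (sub_node k e i) (sub_node k e j))"
  using gdist_sub_node_ge_edge_pot[OF assms(1-4,4-6)] by (simp add: edge_pot_def)

definition end_offset :: "nat \<Rightarrow> 'b::linorder set \<Rightarrow> 'b \<Rightarrow> nat \<Rightarrow> nat" where
  "end_offset k e u i = (if u = Min e then i else k - i)"

lemma gdist_sub_nodes_near_distinct_ends:
  assumes "fin_graph H" "connected_graph H" "0 < k" "e \<in> edges H" "e' \<in> edges H" "e \<noteq> e'"
    "u \<in> e" "w \<in> e'" "u \<noteq> w" "i \<le> k" "j \<le> k"
    "end_offset k e u i \<le> L" "end_offset k e' w j \<le> L" "L \<le> k"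
  shows "int k - int L \<le> int (gdist (subdivision k H) (sub_node k e i) (sub_node k e' j))"
proof -
  have e: "u = Min e \<or> u = Max e" "Min e \<noteq> Max e"
    using assms(7) edge_Min_Max(1,2)[OF assms(1,4)] by auto
  have e': "w = Min e' \<or> w = Max e'" "Min e' \<noteq> Max e'"
    using assms(8) edge_Min_Max(1,2)[OF assms(1,5)] by auto
  have "int k - int L \<le> vertex_pot k e i w"
    using assms(9,10,12,14) e by (auto simp: vertex_pot_def end_offset_def)
  moreover have "0 \<le> vertex_pot k e i (Min e')" "0 \<le> vertex_pot k e i (Max e')"
    using assms(10) by (simp_all add: vertex_pot_def)
  ultimately have "int k - int L \<le> edge_pot k e i e' j"
    using assms(6,8,11,13,14) e' by (auto simp: edge_pot_def end_offset_def)
  then show ?thesis using gdist_sub_node_ge_edge_pot[OF assms(1-5,10,11)] by linarith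
qed

section \<open>Branch sets from an embedding of small distortion\<close>

locale low_distortion_embedding =
  fixes G :: "'a graph" and H :: "'b::linorder graph" and k :: nat
    and f :: "'b + ('b set \<times> nat) \<Rightarrow> 'a" and \<alpha> \<beta> :: real
  assumes fin_H: "fin_graph H"
    and conn_G: "connected_graph G" and conn_H: "connected_graph H"
    and f_verts: "f ` verts (subdivision k H) \<subseteq> verts G"
    and expansion_bound: "\<And>e i. e \<in> edges H \<Longrightarrow> i < k \<Longrightarrow>
      real (gdist G (f (sub_node k e i)) (f (sub_node k e (Suc i)))) \<le> \<alpha>"
    and contraction_bound: "\<And>x y. x \<in> verts (subdivision k H) \<Longrightarrow>
      y \<in> verts (subdivision k H) \<Longrightarrow> x \<noteq> y \<Longrightarrow> real (gdist (subdivision k H) x y) \<le> \<beta> * real (gdist G (f x) (f y))"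
    and expansion_nonneg: "0 \<le> \<alpha>" and contraction_nonneg: "0 \<le> \<beta>"
    and distortion_small: "6 * (\<alpha> * \<beta>) + 3 < real k"
begin

abbreviation J :: "('b + ('b set \<times> nat)) graph" where "J \<equiv> subdivision k H"

abbreviation pt :: "'b set \<Rightarrow> nat \<Rightarrow> 'a" where "pt e i \<equiv> f (sub_node k e i)"

definition half :: nat where "half = k div 2"

lemma half_bounds: "0 < half" "half < k" "half \<le> k - half" "2 * (\<alpha> * \<beta>) < real half"
proof -
  have "0 \<le> \<alpha> * \<beta>" using expansion_nonneg contraction_nonneg by simp
  then show "0 < half" "half < k" "half \<le> k - half" "2 * (\<alpha> * \<beta>) < real half"
    using distortion_small unfolding half_def by linarith+
qed

lemma k_pos: "0 < k"
  using half_bounds(1,2) by simp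

lemma pt_in_verts: "e \<in> edges H \<Longrightarrow> i \<le> k \<Longrightarrow> pt e i \<in> verts G"
  using f_verts sub_node_in_verts[OF fin_H] by blast

lemma gdist_J_le_if_close:
  assumes "x \<in> verts J" "y \<in> verts J" "z \<in> verts G"
    and "real (gdist G (f x) z) \<le> \<alpha>" "real (gdist G (f y) z) \<le> \<alpha>"
  shows "real (gdist J x y) \<le> 2 * (\<alpha> * \<beta>)"
proof (cases "x = y")
  case True
  then show ?thesis using assms(2) expansion_nonneg contraction_nonneg by (simp add: gdist_self)
next
  case False
  have fxy: "f x \<in> verts G" "f y \<in> verts G" using assms(1,2) f_verts by auto
  have "gdist G (f x) (f y) \<le> gdist G (f x) z + gdist G z (f y)"
    using fxy assms(3) by (intro gdist_triangle connected_graph_reach[OF conn_G])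
  also have "gdist G z (f y) = gdist G (f y) z"
    using fxy assms(3) by (intro gdist_commute connected_graph_reach[OF conn_G])
  finally have "real (gdist G (f x) (f y)) \<le> 2 * \<alpha>" using assms(4,5) by linarith
  then have "\<beta> * real (gdist G (f x) (f y)) \<le> \<beta> * (2 * \<alpha>)"
    using contraction_nonneg by (rule mult_left_mono)
  then show ?thesis using contraction_bound[OF assms(1,2) False] by (simp add: mult_ac)
qed

definition seg :: "'b set \<Rightarrow> nat \<Rightarrow> 'a list" where
  "seg e i = (SOME xs. walk G xs \<and> hd xs = pt e i \<and> last xs = pt e (Suc i)
     \<and> length xs = Suc (gdist G (pt e i) (pt e (Suc i))))"

lemma seg:
  assumes "e \<in> edges H" "i < k"
  shows "walk G (seg e i) \<and> hd (seg e i) = pt e i \<and> last (seg e i) = pt e (Suc i)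
    \<and> length (seg e i) = Suc (gdist G (pt e i) (pt e (Suc i)))"
proof -
  have "reach G (pt e i) (pt e (Suc i))"
    using assms by (intro connected_graph_reach[OF conn_G] pt_in_verts) auto
  then show ?thesis
    unfolding seg_def by (rule gdist_shortest_walk) (rule someI, blast)
qed

lemma seg_subset_verts: "e \<in> edges H \<Longrightarrow> i < k \<Longrightarrow> set (seg e i) \<subseteq> verts G"
  using seg walk_set_subset by blast

lemma seg_close:
  assumes "e \<in> edges H" "i < k" "x \<in> set (seg e i)"
  shows "real (gdist G (pt e i) x) \<le> \<alpha>"
proof -
  obtain t where t: "t < length (seg e i)" "x = seg e i ! t"
    using assms(3) by (metis in_set_conv_nth)
  then have "gdist G (pt e i) x \<le> gdist G (pt e i) (pt e (Suc i))"
    using gdist_hd_nth_le[of G "seg e i" t] seg[OF assms(1,2)] by simp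
  then show ?thesis using expansion_bound[OF assms(1,2)] by linarith
qed

definition far_part :: "'b set \<Rightarrow> 'a set" where
  "far_part e = (\<Union>i\<in>{half..<k}. set (seg e i))"

lemma far_part:
  assumes "e \<in> edges H"
  shows "connected_in G (far_part e)" "pt e half \<in> far_part e" "pt e k \<in> far_part e"
proof -
  obtain xs where "walk G xs" "hd xs = pt e half" "last xs = pt e k" "set xs = far_part e"
    using walk_concat[of half k G "seg e" "pt e"] seg[OF assms] half_bounds(2)
    unfolding far_part_def by auto
  then show "connected_in G (far_part e)" "pt e half \<in> far_part e" "pt e k \<in> far_part e"
    using connected_in_set_walk walk_not_Nil by (metis hd_in_set last_in_set)+
qed

lemma pt_0_notin_far_part:
  assumes "e \<in> edges H"
  shows "pt e 0 \<notin> far_part e"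
proof
  assume "pt e 0 \<in> far_part e"
  then obtain i where i: "half \<le> i" "i < k" "pt e 0 \<in> set (seg e i)"
    unfolding far_part_def by auto
  have "pt e 0 \<in> verts G" using pt_in_verts[OF assms] by blast
  then have "real (gdist J (sub_node k e i) (sub_node k e 0)) \<le> 2 * (\<alpha> * \<beta>)"
    using i assms expansion_nonneg seg_close[OF assms i(2,3)]
    by (intro gdist_J_le_if_close sub_node_in_verts[OF fin_H]) (auto simp: gdist_self)
  moreover have "int i \<le> int (gdist J (sub_node k e i) (sub_node k e 0))"
    using gdist_sub_nodes_same_edge[OF fin_H conn_H k_pos assms, of i 0] i(2) by simp
  ultimately show False using i(1) half_bounds(4) by linarith
qed

text \<open>Cutting the image of the first half of e where it first reaches the far part keeps the
  two parts disjoint, yet adjacent.\<close>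

lemma near_part_exists:
  assumes "e \<in> edges H"
  shows "\<exists>A. A \<subseteq> (\<Union>i\<in>{0..<half}. set (seg e i)) \<and> pt e 0 \<in> A \<and> connected_in G A
    \<and> A \<inter> far_part e = {} \<and> (\<exists>x\<in>A. \<exists>y\<in>far_part e. {x, y} \<in> edges G)"
proof -
  obtain xs where xs: "walk G xs" "hd xs = pt e 0" "last xs = pt e half"
    "set xs = (\<Union>i\<in>{0..<half}. set (seg e i))"
    using walk_concat[of 0 half G "seg e" "pt e"] seg[OF assms] half_bounds(1,2) by auto
  obtain ys where ys: "walk G ys" "hd ys = pt e 0" "set ys \<subseteq> set xs" "set ys \<inter> far_part e = {}"
    "\<exists>y\<in>far_part e. {last ys, y} \<in> edges G"
    using walk_enters_set[OF xs(1)] xs(2,3) pt_0_notin_far_part[OF assms] far_part(2)[OF assms]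
    by metis
  moreover have "hd ys \<in> set ys" "last ys \<in> set ys" using walk_not_Nil[OF ys(1)] by simp_all
  ultimately show ?thesis using xs(4) connected_in_set_walk[OF ys(1)]
    by (intro exI[of _ "set ys"]) auto
qed

definition near_part :: "'b set \<Rightarrow> 'a set" where
  "near_part e = (SOME A. A \<subseteq> (\<Union>i\<in>{0..<half}. set (seg e i)) \<and> pt e 0 \<in> A
    \<and> connected_in G A \<and> A \<inter> far_part e = {} \<and> (\<exists>x\<in>A. \<exists>y\<in>far_part e. {x, y} \<in> edges G))"

lemma near_part:
  assumes "e \<in> edges H"
  shows "near_part e \<subseteq> (\<Union>i\<in>{0..<half}. set (seg e i))" "pt e 0 \<in> near_part e"
    "connected_in G (near_part e)" "near_part e \<inter> far_part e = {}"
    "\<exists>x\<in>near_part e. \<exists>y\<in>far_part e. {x, y} \<in> edges G"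
  using someI_ex[OF near_part_exists[OF assms]] unfolding near_part_def by blast+

definition piece :: "'b set \<Rightarrow> 'b \<Rightarrow> 'a set" where
  "piece e u = (if u = Min e then near_part e else far_part e)"

definition branch_set :: "'b \<Rightarrow> 'a set" where
  "branch_set u = (\<Union>e\<in>{e \<in> edges H. u \<in> e}. piece e u)"

lemma piece:
  assumes "e \<in> edges H" "u \<in> e"
  shows "f (Inl u) \<in> piece e u" "connected_in G (piece e u)" "piece e u \<subseteq> verts G"
proof -
  have u: "u = Min e \<or> u = Max e" using assms edge_Min_Max(1)[OF fin_H assms(1)] by blast
  then show "f (Inl u) \<in> piece e u" "connected_in G (piece e u)"
    using near_part(2,3)[OF assms(1)] far_part(1,3)[OF assms(1)] k_pos
    by (auto simp: piece_def)
  have "near_part e \<subseteq> verts G"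
  proof
    fix x assume "x \<in> near_part e"
    then obtain i where "i < half" "x \<in> set (seg e i)" using near_part(1)[OF assms(1)] by auto
    then show "x \<in> verts G" using seg_subset_verts[OF assms(1), of i] half_bounds(2) by auto
  qed
  moreover have "far_part e \<subseteq> verts G"
    using seg_subset_verts[OF assms(1)] by (fastforce simp: far_part_def)
  ultimately show "piece e u \<subseteq> verts G" by (simp add: piece_def)
qed

lemma piece_close:
  assumes "e \<in> edges H" "x \<in> piece e u"
  shows "\<exists>i<k. end_offset k e u i \<le> k - half \<and> real (gdist G (pt e i) x) \<le> \<alpha>"
proof (cases "u = Min e")
  case True
  then obtain i where "i < half" "x \<in> set (seg e i)"
    using assms(2) near_part(1)[OF assms(1)] by (auto simp: piece_def)
  then show ?thesis
    using True half_bounds(2,3) seg_close[OF assms(1)]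
    by (intro exI[of _ i]) (simp add: end_offset_def)
next
  case False
  then obtain i where "half \<le> i" "i < k" "x \<in> set (seg e i)"
    using assms(2) by (auto simp: piece_def far_part_def)
  then show ?thesis
    using False seg_close[OF assms(1)] by (intro exI[of _ i]) (simp add: end_offset_def)
qed

lemma branch_set_disjoint:
  assumes "u \<noteq> v"
  shows "branch_set u \<inter> branch_set v = {}"
proof (rule ccontr)
  assume "branch_set u \<inter> branch_set v \<noteq> {}"
  then obtain x e e' where e: "e \<in> edges H" "u \<in> e" "x \<in> piece e u"
    and e': "e' \<in> edges H" "v \<in> e'" "x \<in> piece e' v"
    unfolding branch_set_def by blast
  show False
  proof (cases "e = e'")
    case True
    have "u = Min e \<or> u = Max e" "v = Min e \<or> v = Max e"
      using True e(2) e'(2) edge_Min_Max(1)[OF fin_H e(1)] by blast+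
    then show False
      using True e(3) e'(3) assms near_part(4)[OF e(1)] by (auto simp: piece_def)
  next
    case False
    obtain i where i: "i < k" "end_offset k e u i \<le> k - half" "real (gdist G (pt e i) x) \<le> \<alpha>"
      using piece_close[OF e(1,3)] by blast
    obtain j where j: "j < k" "end_offset k e' v j \<le> k - half" "real (gdist G (pt e' j) x) \<le> \<alpha>"
      using piece_close[OF e'(1,3)] by blast
    have "real (gdist J (sub_node k e i) (sub_node k e' j)) \<le> 2 * (\<alpha> * \<beta>)"
      using i j e e' piece(3)
      by (intro gdist_J_le_if_close[where z = x] sub_node_in_verts[OF fin_H]) auto
    moreover have "int k - int (k - half) \<le> int (gdist J (sub_node k e i) (sub_node k e' j))"
      using i j e e' False assms
      by (intro gdist_sub_nodes_near_distinct_ends[OF fin_H conn_H k_pos]) auto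
    ultimately show False using half_bounds(2,4) by linarith
  qed
qed

lemma branch_sets_adjacent:
  assumes "{u, v} \<in> edges H"
  shows "\<exists>x\<in>branch_set u. \<exists>y\<in>branch_set v. {x, y} \<in> edges G"
proof -
  let ?e = "{u, v}"
  obtain x y where xy: "x \<in> near_part ?e" "y \<in> far_part ?e" "{x, y} \<in> edges G"
    using near_part(5)[OF assms] by blast
  have pieces: "piece ?e u \<subseteq> branch_set u" "piece ?e v \<subseteq> branch_set v"
    using assms unfolding branch_set_def by blast+
  have "(u = Min ?e \<and> v \<noteq> Min ?e) \<or> (v = Min ?e \<and> u \<noteq> Min ?e)"
    using edge_Min_Max(1,2)[OF fin_H assms] by (metis doubleton_eq_iff less_irrefl)
  then show ?thesis
  proof
    assume "u = Min ?e \<and> v \<noteq> Min ?e"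
    then have "x \<in> branch_set u" "y \<in> branch_set v" using xy pieces by (auto simp: piece_def)
    then show ?thesis using xy(3) by blast
  next
    assume "v = Min ?e \<and> u \<noteq> Min ?e"
    then have "y \<in> branch_set u" "x \<in> branch_set v" using xy pieces by (auto simp: piece_def)
    moreover have "{y, x} \<in> edges G" using xy(3) by (simp add: insert_commute)
    ultimately show ?thesis by blast
  qed
qed

theorem minor:
  assumes "\<forall>u\<in>verts H. \<exists>e\<in>edges H. u \<in> e"
  shows "is_minor H G"
  unfolding is_minor_def
proof (intro exI[of _ branch_set] conjI ballI impI allI)
  fix u assume "u \<in> verts H"
  then obtain e where e: "e \<in> edges H" "u \<in> e" using assms by blast
  show "branch_set u \<noteq> {}" using piece(1)[OF e] e unfolding branch_set_def by blast
  show "branch_set u \<subseteq> verts G" using piece(3) unfolding branch_set_def by blast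
  show "connected_in G (branch_set u)"
    unfolding branch_set_def by (rule connected_in_UN[where z = "f (Inl u)"]) (simp add: piece)
qed (simp_all add: branch_set_disjoint branch_sets_adjacent)

end

section \<open>Minors and distortion\<close>

lemma edges_empty_if_isolated:
  assumes "fin_graph H" "connected_graph H" "u \<in> verts H" "\<forall>e\<in>edges H. u \<notin> e"
  shows "edges H = {}"
proof (rule ccontr)
  assume "edges H \<noteq> {}"
  then obtain e where e: "e \<in> edges H" by blast
  then obtain a b where "{a, b} \<subseteq> verts H" "a \<noteq> b"
    using assms(1) by (auto simp: fin_graph_def card_2_iff)
  then obtain v where "v \<in> verts H" "v \<noteq> u" by blast
  then obtain ys where "walk H ys" "hd ys = u" "last ys = v"
    using assms(2,3) unfolding connected_graph_def connected_in_def by blast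
  then show False using assms(4) \<open>v \<noteq> u\<close>
    by (cases ys; cases "tl ys") (auto simp: walk_Cons_Cons_iff dest: walk_not_Nil)
qed

lemma is_minor_edgeless:
  assumes "edges H = {}" "inj_on g (verts H)" "g ` verts H \<subseteq> verts G"
  shows "is_minor H G"
  unfolding is_minor_def using assms
  by (intro exI[of _ "\<lambda>v. {g v}"]) (auto simp: connected_in_singleton inj_on_def)

lemma finite_verts_subdivision:
  fixes H :: "'b::linorder graph"
  assumes "fin_graph H"
  shows "finite (verts (subdivision k H))"
proof -
  have "finite (edges H)"
    using assms by (auto simp: fin_graph_def intro: finite_subset[of _ "Pow (verts H)"])
  then have "finite (Inr ` (edges H \<times> {..<k}) :: ('b + ('b set \<times> nat)) set)"
    by simp
  moreover have
    "{Inr (e, i) | e i. e \<in> edges H \<and> 0 < i \<and> i < k} \<subseteq> Inr ` (edges H \<times> {..<k})"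
    by auto
  ultimately show ?thesis
    using assms by (auto simp: verts_subdivision fin_graph_def intro: finite_subset)
qed

lemma finite_pair_image: "finite V \<Longrightarrow> finite {g x y | x y. x \<in> V \<and> y \<in> V \<and> x \<noteq> y}"
  by (rule finite_subset[of _ "case_prod g ` (V \<times> V)"]) auto

lemma ratio_le_expansion:
  "finite (verts X) \<Longrightarrow> x \<in> verts X \<Longrightarrow> y \<in> verts X \<Longrightarrow> x \<noteq> y \<Longrightarrow>
    real (gdist Y (f x) (f y)) / real (gdist X x y) \<le> expansion X Y f"
  unfolding expansion_def by (rule Max_ge[OF finite_pair_image]) auto

lemma ratio_le_contraction:
  "finite (verts X) \<Longrightarrow> x \<in> verts X \<Longrightarrow> y \<in> verts X \<Longrightarrow> x \<noteq> y \<Longrightarrow>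
    real (gdist X x y) / real (gdist Y (f x) (f y)) \<le> contraction X Y f"
  unfolding contraction_def by (rule Max_ge[OF finite_pair_image]) auto

lemma minor_if_distortion_small:
  fixes G :: "'a graph" and H :: "'b::linorder graph" and f :: "'b + ('b set \<times> nat) \<Rightarrow> 'a"
  assumes fin_H: "fin_graph H" and conn: "connected_graph G" "connected_graph H" and "0 < k"
    and inj: "inj_on f (verts (subdivision k H))"
    and f_verts: "f ` verts (subdivision k H) \<subseteq> verts G"
    and small: "distortion (subdivision k H) G f < real k / 6 - 1 / 2"
  shows "is_minor H G"
proof (cases "edges H = {}")
  case True
  then show ?thesis
    using inj f_verts
    by (intro is_minor_edgeless[where g = "f \<circ> Inl"]) (auto simp: verts_subdivision inj_on_def)
next
  case False
  let ?J = "subdivision k H"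
  have fin_J: "finite (verts ?J)" using finite_verts_subdivision[OF fin_H] .
  obtain e0 where e0: "e0 \<in> edges H" using False by blast
  let ?x0 = "sub_node k e0 0" and ?x1 = "sub_node k e0 1"
  have x01: "?x0 \<in> verts ?J" "?x1 \<in> verts ?J" "?x0 \<noteq> ?x1"
    using sub_node_in_verts[OF fin_H e0, of 0 k] sub_node_in_verts[OF fin_H e0, of 1 k]
      sub_node_inject[OF fin_H e0, of 0 k 1] \<open>0 < k\<close> by auto
  have "low_distortion_embedding G H k f (expansion ?J G f) (contraction ?J G f)"
  proof (unfold_locales)
    fix e i assume e: "e \<in> edges H" "i < k"
    let ?x = "sub_node k e i" and ?y = "sub_node k e (Suc i)"
    have "?x \<in> verts ?J" "?y \<in> verts ?J" "?x \<noteq> ?y"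
      using e sub_node_in_verts[OF fin_H e(1)] sub_node_inject[OF fin_H e(1)] by auto
    then show "real (gdist G (f ?x) (f ?y)) \<le> expansion ?J G f"
      using ratio_le_expansion[OF fin_J] gdist_sub_node_Suc[OF fin_H e] by fastforce
  next
    fix x y assume xy: "x \<in> verts ?J" "y \<in> verts ?J" "x \<noteq> y"
    have "0 < gdist G (f x) (f y)"
      using xy inj f_verts
      by (intro gdist_pos connected_graph_reach[OF conn(1)]) (auto simp: inj_on_def)
    then show "real (gdist ?J x y) \<le> contraction ?J G f * real (gdist G (f x) (f y))"
      using ratio_le_contraction[OF fin_J xy, of G f] by (simp add: divide_le_eq)
  next
    show "0 \<le> expansion ?J G f"
      using ratio_le_expansion[OF fin_J x01] by (rule order_trans[rotated]) simp
    show "0 \<le> contraction ?J G f"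
      using ratio_le_contraction[OF fin_J x01] by (rule order_trans[rotated]) simp
    show "6 * (expansion ?J G f * contraction ?J G f) + 3 < real k"
      using small by (simp add: distortion_def)
  qed (use fin_H conn f_verts in auto)
  moreover have "\<forall>u\<in>verts H. \<exists>e\<in>edges H. u \<in> e"
    using edges_empty_if_isolated[OF fin_H conn(2)] False by blast
  ultimately show ?thesis by (rule low_distortion_embedding.minor)
qed

theorem lemma1:
  fixes G :: "'a graph" and H :: "'b::linorder graph" and k :: nat
    and f :: "'b + ('b set \<times> nat) \<Rightarrow> 'a"
  assumes "fin_graph G" and "fin_graph H"
    and "connected_graph G" and "connected_graph H"
    and "\<not> is_minor H G"
    and "k \<ge> 1"
    and "inj_on f (verts (subdivision k H))"
    and "f ` verts (subdivision k H) \<subseteq> verts G"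
  shows "distortion (subdivision k H) G f \<ge> real k / 6 - 1 / 2"
  using minor_if_distortion_small[OF assms(2-4) _ assms(7,8)] assms(5,6) by fastforce

end
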